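(* Let $\mathbf{x}=x_1,\ldots,x_n$ and $\mathbf{u}=u_1,\ldots,u_m$ be differential indeterminates over $\mathbb{C}$, and let $\mathbf{f}=f_1,\ldots,f_n\in\mathbb{C}[\mathbf{x},\mathbf{u}]$ and $\mathbf{g}=g_1,\ldots,g_s\in\mathbb{C}[\mathbf{x},\mathbf{u}]$ be polynomials such that the polynomial ideal $(\mathbf{g})\subseteq\mathbb{C}[\mathbf{x},\mathbf{u}]$ is radical and $0$-dimensional. Then $$1\in[\dot{\mathbf{x}}-\mathbf{f},\mathbf{g}]\subseteq\mathbb{C}\{\mathbf{x},\mathbf{u}\}\quad\Longleftrightarrow\quad 1\in(\dot{\mathbf{x}}-\mathbf{f},\mathbf{g},\dot{\mathbf{g}})\subseteq\mathbb{C}[\mathbf{x},\mathbf{u},\dot{\mathbf{x}},\dot{\mathbf{u}}].$$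
   Context: $\mathbb{C}\{\mathbf{x},\mathbf{u}\}$ is the differential polynomial ring $\mathbb{C}[x_j^{(p)},u_k^{(p)}: p\in\mathbb{N}_0]$ with derivation $x_j^{(p)}\mapsto x_j^{(p+1)}$, $u_k^{(p)}\mapsto u_k^{(p+1)}$, and $\mathbb{C}$ as constants; $\dot{z}$ denotes $z^{(1)}$, and for a family of polynomials $\mathbf{h}$, $\dot{\mathbf{h}}$ denotes the family of their (total) derivatives. $[\mathbf{h}]$ denotes the differential ideal generated by $\mathbf{h}$, and $(\cdot)$ the ordinary polynomial ideal in the indicated polynomial ring. $\dot{\mathbf{x}}-\mathbf{f}$ denotes $\dot x_1-f_1,\ldots,\dot x_n-f_n$. *)

theory Defs
  imports Complex_Main "HOL-Library.Poly_Mapping"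
begin

text \<open>Differential indeterminates: X j p is x_j^(p), U k p is u_k^(p).\<close>
datatype dvar = X nat nat | U nat nat

type_synonym dpoly = "(dvar \<Rightarrow>\<^sub>0 nat) \<Rightarrow>\<^sub>0 complex"

definition pvar :: "dvar \<Rightarrow> dpoly" where
  "pvar v = Poly_Mapping.single (Poly_Mapping.single v 1) 1"

definition pconst :: "complex \<Rightarrow> dpoly" where
  "pconst c = Poly_Mapping.single 0 c"

definition vars :: "dpoly \<Rightarrow> dvar set" where
  "vars p = \<Union> (Poly_Mapping.keys ` Poly_Mapping.keys p)"

fun shift :: "dvar \<Rightarrow> dvar" where
  "shift (X j p) = X j (Suc p)"
| "shift (U k p) = U k (Suc p)"

text \<open>Total derivative: the C-linear derivation extending shift (Leibniz rule on monomials).\<close>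
definition deriv :: "dpoly \<Rightarrow> dpoly" where
  "deriv q = (\<Sum>mo\<in>Poly_Mapping.keys q. \<Sum>v\<in>Poly_Mapping.keys (mo :: dvar \<Rightarrow>\<^sub>0 nat).
      Poly_Mapping.single (mo - Poly_Mapping.single v 1 + Poly_Mapping.single (shift v) 1)
        (Poly_Mapping.lookup q mo * of_nat (Poly_Mapping.lookup mo v)))"

definition polyring :: "dvar set \<Rightarrow> dpoly set" where
  "polyring V = {p. vars p \<subseteq> V}"

definition ideal_in :: "dpoly set \<Rightarrow> dpoly set \<Rightarrow> dpoly set" where
  "ideal_in R S = {p. \<exists>F c. finite F \<and> F \<subseteq> S \<and> (\<forall>q\<in>F. c q \<in> R) \<and> p = (\<Sum>q\<in>F. c q * q)}"

definition diff_ideal_in :: "dpoly set \<Rightarrow> dpoly set \<Rightarrow> dpoly set" where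
  "diff_ideal_in R S = ideal_in R {(deriv ^^ k) h | h k. h \<in> S}"

definition radical_in :: "dpoly set \<Rightarrow> dpoly set \<Rightarrow> bool" where
  "radical_in R I \<longleftrightarrow> (\<forall>p\<in>R. \<forall>k. p ^ k \<in> I \<longrightarrow> p \<in> I)"

text \<open>Zero-dimensional: R/I is a finite-dimensional C-vector space.\<close>
definition zero_dim_in :: "dpoly set \<Rightarrow> dpoly set \<Rightarrow> bool" where
  "zero_dim_in R I \<longleftrightarrow> (\<exists>B. finite B \<and> B \<subseteq> R \<and>
      (\<forall>p\<in>R. \<exists>a. p - (\<Sum>b\<in>B. pconst (a b) * b) \<in> I))"

text \<open>Variables of C[x,u] (order 0), of C[x,u,x',u'] (order \<le> 1), of C{x,u} (all orders).\<close>
definition vars_upto :: "nat \<Rightarrow> nat \<Rightarrow> nat \<Rightarrow> dvar set" where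
  "vars_upto n m r = {X j p | j p. j < n \<and> p \<le> r} \<union> {U k p | k p. k < m \<and> p \<le> r}"

definition vars_all :: "nat \<Rightarrow> nat \<Rightarrow> dvar set" where
  "vars_all n m = {X j p | j p. j < n} \<union> {U k p | k p. k < m}"

end

theory Submission
  imports Defs
    "HOL-Computational_Algebra.Field_as_Ring"
    "HOL-Computational_Algebra.Fundamental_Theorem_Algebra"
    "HOL-Computational_Algebra.Polynomial_Factorial"
begin

text \<open>
  One direction holds because (x' - f, g, g') is contained in the differential ideal. For the
  other, apply the ring homomorphism sending every variable of positive order to 0: it kills
  all proper derivatives of the generators, fixes g and maps x'_i - f_i to -f_i, so it suffices
  that each x'_j lies in (x' - f, g, g'). As (g) is zero-dimensional, the powers of x_j are
  linearly dependent modulo (g), so p(x_j) \<in> (g) for some univariate p \<noteq> 0; as (g) is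
  radical, also q(x_j) \<in> (g) for the squarefree q with the same roots as p. Differentiating
  gives q'(x_j) x'_j \<in> (x' - f, g, g'), and a Bezout identity a q + b q' = 1 yields x'_j.
\<close>

section \<open>Polynomial rings and their ideals\<close>

lemma pconst_add: "pconst (a + b) = pconst a + pconst b"
  by (simp add: pconst_def single_add)

lemma pconst_mult: "pconst (a * b) = pconst a * pconst b"
  by (simp add: pconst_def mult_single)

lemma pconst_0 [simp]: "pconst 0 = 0"
  by (simp add: pconst_def)

lemma pconst_1 [simp]: "pconst 1 = 1"
  by (simp add: pconst_def)

lemma pconst_uminus: "pconst (- a) = - pconst a"
  by (simp add: pconst_def single_uminus)

lemma vars_single: "vars (Poly_Mapping.single mo c) \<subseteq> Poly_Mapping.keys mo"
  by (simp add: vars_def)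

lemma vars_add: "vars (p + q) \<subseteq> vars p \<union> vars q"
  unfolding vars_def using keys_add[of p q] by auto

lemma vars_uminus: "vars (- p) = vars p"
  by (simp add: vars_def keys_minus)

lemma vars_mult: "vars (p * q) \<subseteq> vars p \<union> vars q"
proof
  fix v assume "v \<in> vars (p * q)"
  then obtain mo where mo: "mo \<in> Poly_Mapping.keys (p * q)" "v \<in> Poly_Mapping.keys mo"
    unfolding vars_def by auto
  then obtain a b where "mo = a + b" "a \<in> Poly_Mapping.keys p" "b \<in> Poly_Mapping.keys q"
    using keys_mult[of p q] by auto
  then show "v \<in> vars p \<union> vars q"
    using mo keys_add[of a b] unfolding vars_def by auto
qed

lemma vars_pconst: "vars (pconst c) = {}"
  by (simp add: vars_def pconst_def)

lemma vars_pvar: "vars (pvar v) = {v}"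
  by (simp add: vars_def pvar_def)

lemma polyring_add: "p \<in> polyring V \<Longrightarrow> q \<in> polyring V \<Longrightarrow> p + q \<in> polyring V"
  using vars_add[of p q] by (auto simp: polyring_def)

lemma polyring_mult: "p \<in> polyring V \<Longrightarrow> q \<in> polyring V \<Longrightarrow> p * q \<in> polyring V"
  using vars_mult[of p q] by (auto simp: polyring_def)

lemma polyring_uminus: "p \<in> polyring V \<Longrightarrow> - p \<in> polyring V"
  by (simp add: polyring_def vars_uminus)

lemma polyring_pconst: "pconst c \<in> polyring V"
  by (simp add: polyring_def vars_pconst)

lemma polyring_0: "0 \<in> polyring V"
  using polyring_pconst[of 0] by simp

lemma polyring_1: "1 \<in> polyring V"
  using polyring_pconst[of 1] by simp

lemma polyring_pvar: "v \<in> V \<Longrightarrow> pvar v \<in> polyring V"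
  by (simp add: polyring_def vars_pvar)

lemma polyring_mono: "V \<subseteq> W \<Longrightarrow> polyring V \<subseteq> polyring W"
  by (auto simp: polyring_def)

lemma polyring_sum: "(\<And>i. i \<in> A \<Longrightarrow> f i \<in> polyring V) \<Longrightarrow> sum f A \<in> polyring V"
  by (induction A rule: infinite_finite_induct) (auto intro: polyring_add polyring_0)

lemma polyring_power: "p \<in> polyring V \<Longrightarrow> p ^ k \<in> polyring V"
  by (induction k) (auto intro: polyring_mult polyring_1)

lemma ideal_inI:
  assumes "finite F" "F \<subseteq> S" "\<forall>q\<in>F. c q \<in> R" "p = (\<Sum>q\<in>F. c q * q)"
  shows "p \<in> ideal_in R S"
  unfolding ideal_in_def by (rule CollectI, rule exI[of _ F], rule exI[of _ c]) (use assms in simp)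

lemma ideal_inE:
  assumes "p \<in> ideal_in R S"
  obtains F c where "finite F" "F \<subseteq> S" "\<forall>q\<in>F. c q \<in> R" "p = (\<Sum>q\<in>F. c q * q)"
  using assms unfolding ideal_in_def by (auto simp only: mem_Collect_eq)

lemma ideal_in_0: "0 \<in> ideal_in R S"
  by (rule ideal_inI[of "{}"]) auto

lemma ideal_in_generator: "s \<in> S \<Longrightarrow> 1 \<in> R \<Longrightarrow> s \<in> ideal_in R S"
  by (rule ideal_inI[of "{s}" _ "\<lambda>_. 1"]) auto

lemma ideal_in_mono:
  assumes "R \<subseteq> R'" "S \<subseteq> S'"
  shows "ideal_in R S \<subseteq> ideal_in R' S'"
proof
  fix p assume "p \<in> ideal_in R S"
  then obtain F c where F: "finite F" "F \<subseteq> S" "\<forall>x\<in>F. c x \<in> R" "p = (\<Sum>x\<in>F. c x * x)"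
    by (rule ideal_inE)
  then show "p \<in> ideal_in R' S'"
    using assms by (intro ideal_inI[of F _ c]) auto
qed

lemma ideal_in_add:
  assumes p: "p \<in> ideal_in (polyring V) S" and q: "q \<in> ideal_in (polyring V) S"
  shows "p + q \<in> ideal_in (polyring V) S"
proof -
  from p obtain F c where F: "finite F" "F \<subseteq> S" "\<forall>x\<in>F. c x \<in> polyring V" "p = (\<Sum>x\<in>F. c x * x)"
    by (rule ideal_inE)
  from q obtain G d where G: "finite G" "G \<subseteq> S" "\<forall>x\<in>G. d x \<in> polyring V" "q = (\<Sum>x\<in>G. d x * x)"
    by (rule ideal_inE)
  define c' where "c' x = (if x \<in> F then c x else 0)" for x
  define d' where "d' x = (if x \<in> G then d x else 0)" for x
  have "p = (\<Sum>x\<in>F \<union> G. c' x * x)" "q = (\<Sum>x\<in>F \<union> G. d' x * x)"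
    unfolding F(4) G(4) c'_def d'_def
    by (rule sum.mono_neutral_cong_left; use F G in auto)+
  then have "p + q = (\<Sum>x\<in>F \<union> G. (c' x + d' x) * x)"
    by (simp add: distrib_right sum.distrib)
  moreover have "\<forall>x\<in>F \<union> G. c' x + d' x \<in> polyring V"
    using F(3) G(3) by (auto simp: c'_def d'_def intro: polyring_add polyring_0)
  ultimately show ?thesis
    using F G by (intro ideal_inI[of "F \<union> G"]) auto
qed

lemma ideal_in_mult:
  assumes p: "p \<in> ideal_in (polyring V) S" and r: "r \<in> polyring V"
  shows "r * p \<in> ideal_in (polyring V) S"
proof -
  from p obtain F c where F: "finite F" "F \<subseteq> S" "\<forall>x\<in>F. c x \<in> polyring V" "p = (\<Sum>x\<in>F. c x * x)"
    by (rule ideal_inE)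
  have "r * p = (\<Sum>x\<in>F. (r * c x) * x)"
    unfolding F(4) sum_distrib_left mult.assoc ..
  then show ?thesis
    using F r by (intro ideal_inI[of F]) (auto intro: polyring_mult)
qed

lemma ideal_in_diff:
  assumes "p \<in> ideal_in (polyring V) S" and "q \<in> ideal_in (polyring V) S"
  shows "p - q \<in> ideal_in (polyring V) S"
  using ideal_in_add[OF assms(1) ideal_in_mult[OF assms(2) polyring_uminus[OF polyring_1]]] by simp

lemma ideal_in_sum:
  "(\<And>i. i \<in> A \<Longrightarrow> f i \<in> ideal_in (polyring V) S) \<Longrightarrow> sum f A \<in> ideal_in (polyring V) S"
  by (induction A rule: infinite_finite_induct) (auto intro: ideal_in_0 ideal_in_add)

section \<open>Maps defined term by term\<close>

abbreviation sg :: "dvar \<Rightarrow> dvar \<Rightarrow>\<^sub>0 nat" where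
  "sg v \<equiv> Poly_Mapping.single v 1"

lemma keys_add_nat: "Poly_Mapping.keys (a + b) = Poly_Mapping.keys a \<union> Poly_Mapping.keys (b :: 'x \<Rightarrow>\<^sub>0 nat)"
  by (auto simp: in_keys_iff lookup_add)

lemma poly_mapping_sum_single: "p = (\<Sum>mo\<in>Poly_Mapping.keys p. Poly_Mapping.single mo (Poly_Mapping.lookup p mo))"
  by (rule poly_mapping_eqI) (simp add: lookup_sum lookup_single when_def sum.delta in_keys_iff)

lemma dpoly_mult_sum_single: "(p :: dpoly) * q = (\<Sum>a\<in>Poly_Mapping.keys p. \<Sum>b\<in>Poly_Mapping.keys q.
    Poly_Mapping.single (a + b) (Poly_Mapping.lookup p a * Poly_Mapping.lookup q b))"
  by (subst poly_mapping_sum_single[of p], subst poly_mapping_sum_single[of q])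
    (simp add: sum_product mult_single)

definition termwise :: "((dvar \<Rightarrow>\<^sub>0 nat) \<Rightarrow> complex \<Rightarrow> dpoly) \<Rightarrow> dpoly \<Rightarrow> dpoly" where
  "termwise D p = (\<Sum>mo\<in>Poly_Mapping.keys p. D mo (Poly_Mapping.lookup p mo))"

locale additive_term_map =
  fixes D :: "(dvar \<Rightarrow>\<^sub>0 nat) \<Rightarrow> complex \<Rightarrow> dpoly"
  assumes additive: "D mo (a + b) = D mo a + D mo b"
begin

lemma zero: "D mo 0 = 0"
  using additive[of mo 0 0] by simp

lemma termwise_superset:
  assumes "finite K" "Poly_Mapping.keys p \<subseteq> K"
  shows "termwise D p = (\<Sum>mo\<in>K. D mo (Poly_Mapping.lookup p mo))"
  unfolding termwise_def
  by (rule sum.mono_neutral_left) (use assms in \<open>auto simp: in_keys_iff zero\<close>)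

lemma termwise_add: "termwise D (p + q) = termwise D p + termwise D q"
proof -
  let ?K = "Poly_Mapping.keys p \<union> Poly_Mapping.keys q"
  have "termwise D (p + q) = (\<Sum>mo\<in>?K. D mo (Poly_Mapping.lookup (p + q) mo))"
    by (rule termwise_superset[OF _ keys_add]) simp
  also have "\<dots> = termwise D p + termwise D q"
    using termwise_superset[of ?K p] termwise_superset[of ?K q]
    by (simp add: lookup_add additive sum.distrib)
  finally show ?thesis .
qed

lemma termwise_single: "termwise D (Poly_Mapping.single mo c) = D mo c"
  using termwise_superset[of "{mo}" "Poly_Mapping.single mo c"] by simp

lemma termwise_sum: "termwise D (sum f A) = (\<Sum>a\<in>A. termwise D (f a))"
  by (induction A rule: infinite_finite_induct) (simp_all add: termwise_add termwise_def[of D 0])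

lemma termwise_diff: "termwise D (p - q) = termwise D p - termwise D q"
  using termwise_add[of "p - q" q] by (simp add: algebra_simps)

lemma termwise_multiplicative:
  assumes "\<And>a b c d. D (a + b) (c * d) = D a c * D b d"
  shows "termwise D (p * q) = termwise D p * termwise D q"
proof -
  have "termwise D (p * q) = (\<Sum>a\<in>Poly_Mapping.keys p. \<Sum>b\<in>Poly_Mapping.keys q.
      D a (Poly_Mapping.lookup p a) * D b (Poly_Mapping.lookup q b))"
    by (subst dpoly_mult_sum_single) (simp add: termwise_sum termwise_single assms)
  also have "\<dots> = termwise D p * termwise D q"
    by (simp add: termwise_def sum_product)
  finally show ?thesis .
qed

lemma termwise_leibniz:
  assumes "\<And>a b c d. D (a + b) (c * d)
    = D a c * Poly_Mapping.single b d + Poly_Mapping.single a c * D b d"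
  shows "termwise D (p * q) = termwise D p * q + p * termwise D q"
proof -
  have "termwise D (p * q) = (\<Sum>a\<in>Poly_Mapping.keys p. \<Sum>b\<in>Poly_Mapping.keys q.
      D a (Poly_Mapping.lookup p a) * Poly_Mapping.single b (Poly_Mapping.lookup q b) +
      Poly_Mapping.single a (Poly_Mapping.lookup p a) * D b (Poly_Mapping.lookup q b))"
    by (subst dpoly_mult_sum_single) (simp add: termwise_sum termwise_single assms)
  also have "\<dots> = termwise D p * (\<Sum>b\<in>Poly_Mapping.keys q. Poly_Mapping.single b (Poly_Mapping.lookup q b))
      + (\<Sum>a\<in>Poly_Mapping.keys p. Poly_Mapping.single a (Poly_Mapping.lookup p a)) * termwise D q"
    by (simp add: termwise_def sum_product sum.distrib)
  also have "\<dots> = termwise D p * q + p * termwise D q"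
    by (simp flip: poly_mapping_sum_single)
  finally show ?thesis .
qed

end

section \<open>Truncation and total derivative\<close>

fun dorder :: "dvar \<Rightarrow> nat" where
  "dorder (X j p) = p"
| "dorder (U k p) = p"

definition trunc_term :: "(dvar \<Rightarrow>\<^sub>0 nat) \<Rightarrow> complex \<Rightarrow> dpoly" where
  "trunc_term mo c =
     (if \<forall>v\<in>Poly_Mapping.keys mo. dorder v = 0 then Poly_Mapping.single mo c else 0)"

definition trunc :: "dpoly \<Rightarrow> dpoly" where
  "trunc = termwise trunc_term"

interpretation trunc: additive_term_map trunc_term
  by standard (simp add: trunc_term_def single_add)

lemma trunc_diff: "trunc (p - q) = trunc p - trunc q"
  unfolding trunc_def by (rule trunc.termwise_diff)

lemma trunc_sum: "trunc (sum f A) = (\<Sum>a\<in>A. trunc (f a))"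
  unfolding trunc_def by (rule trunc.termwise_sum)

lemma trunc_single: "trunc (Poly_Mapping.single mo c) = trunc_term mo c"
  unfolding trunc_def by (rule trunc.termwise_single)

lemma trunc_mult: "trunc (p * q) = trunc p * trunc q"
  unfolding trunc_def
  by (rule trunc.termwise_multiplicative) (auto simp: trunc_term_def keys_add_nat mult_single)

lemma trunc_eq_self:
  assumes "\<forall>v\<in>vars p. dorder v = 0"
  shows "trunc p = p"
proof -
  have "trunc p = (\<Sum>mo\<in>Poly_Mapping.keys p. Poly_Mapping.single mo (Poly_Mapping.lookup p mo))"
    unfolding trunc_def termwise_def
    by (rule sum.cong) (use assms in \<open>auto simp: trunc_term_def vars_def\<close>)
  then show ?thesis
    by (simp flip: poly_mapping_sum_single)
qed

lemma trunc_1: "trunc 1 = 1"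
  by (rule trunc_eq_self) (simp add: vars_pconst flip: pconst_1)

lemma trunc_polyring:
  assumes "p \<in> polyring V"
  shows "trunc p \<in> polyring {v \<in> V. dorder v = 0}"
  unfolding trunc_def termwise_def
proof (rule polyring_sum)
  fix mo assume "mo \<in> Poly_Mapping.keys p"
  then have "Poly_Mapping.keys mo \<subseteq> V"
    using assms by (auto simp: vars_def polyring_def)
  then have "Poly_Mapping.single mo c \<in> polyring {v \<in> V. dorder v = 0}"
    if "\<forall>v\<in>Poly_Mapping.keys mo. dorder v = 0" for c
    using that vars_single[of mo c] by (auto simp: polyring_def)
  then show "trunc_term mo (Poly_Mapping.lookup p mo) \<in> polyring {v \<in> V. dorder v = 0}"
    by (simp add: trunc_term_def polyring_0)
qed

lemma trunc_ideal_in: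
  assumes p: "p \<in> ideal_in (polyring W) S"
    and W: "{v \<in> W. dorder v = 0} \<subseteq> V"
    and S: "\<And>y. y \<in> S \<Longrightarrow> trunc y \<in> ideal_in (polyring V) T"
  shows "trunc p \<in> ideal_in (polyring V) T"
proof -
  from p obtain F c where F: "finite F" "F \<subseteq> S" "\<forall>y\<in>F. c y \<in> polyring W" "p = (\<Sum>y\<in>F. c y * y)"
    by (rule ideal_inE)
  have "trunc (c y) \<in> polyring V" if "y \<in> F" for y
    using trunc_polyring[of "c y" W] polyring_mono[OF W] F(3) that by blast
  then have "trunc (c y) * trunc y \<in> ideal_in (polyring V) T" if "y \<in> F" for y
    using ideal_in_mult S F(2) that by blast
  then show ?thesis
    unfolding F(4) trunc_sum trunc_mult by (rule ideal_in_sum)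
qed

definition deriv_term :: "(dvar \<Rightarrow>\<^sub>0 nat) \<Rightarrow> complex \<Rightarrow> dpoly" where
  "deriv_term mo c = (\<Sum>v\<in>Poly_Mapping.keys mo.
      Poly_Mapping.single (mo - sg v + sg (shift v)) (c * of_nat (Poly_Mapping.lookup mo v)))"

lemma deriv_termwise: "deriv = termwise deriv_term"
  by (rule ext) (simp add: deriv_def termwise_def deriv_term_def)

interpretation deriv: additive_term_map deriv_term
  by standard (simp add: deriv_term_def single_add distrib_right sum.distrib)

lemma deriv_add: "deriv (p + q) = deriv p + deriv q"
  unfolding deriv_termwise by (rule deriv.termwise_add)

lemma deriv_sum: "deriv (sum f A) = (\<Sum>a\<in>A. deriv (f a))"
  unfolding deriv_termwise by (rule deriv.termwise_sum)

lemma deriv_single: "deriv (Poly_Mapping.single mo c) = deriv_term mo c"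
  unfolding deriv_termwise by (rule deriv.termwise_single)

lemma deriv_term_superset:
  assumes "finite W" "Poly_Mapping.keys mo \<subseteq> W"
  shows "deriv_term mo c = (\<Sum>v\<in>W.
    Poly_Mapping.single (mo - sg v + sg (shift v)) (c * of_nat (Poly_Mapping.lookup mo v)))"
  unfolding deriv_term_def
  by (rule sum.mono_neutral_left) (use assms in \<open>auto simp: in_keys_iff\<close>)

lemma monomial_shift_add:
  assumes "Poly_Mapping.lookup a v \<noteq> 0"
  shows "a + b - sg v + sg w = (a - sg v + sg w) + (b :: dvar \<Rightarrow>\<^sub>0 nat)"
proof (rule poly_mapping_eqI)
  fix k
  show "Poly_Mapping.lookup (a + b - sg v + sg w) k = Poly_Mapping.lookup (a - sg v + sg w + b) k"
    using assms by (cases "v = k") (auto simp: lookup_add lookup_minus lookup_single when_def)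
qed

lemma single_monomial_shift_mult:
  "Poly_Mapping.single (a - sg v + sg w) (c * of_nat (Poly_Mapping.lookup a v)) * Poly_Mapping.single b d
    = (Poly_Mapping.single (a + b - sg v + sg w) (c * d * of_nat (Poly_Mapping.lookup a v)) :: dpoly)"
proof (cases "Poly_Mapping.lookup a v = 0")
  case False
  then have "a + b - sg v + sg w = a - sg v + sg w + b"
    by (rule monomial_shift_add)
  then show ?thesis
    by (simp add: mult_single ac_simps)
qed simp

lemma deriv_term_leibniz:
  "deriv_term (a + b) (c * d)
    = deriv_term a c * Poly_Mapping.single b d + Poly_Mapping.single a c * deriv_term b d"
proof -
  let ?W = "Poly_Mapping.keys a \<union> Poly_Mapping.keys b"
  let ?M = "\<lambda>v. a + b - sg v + sg (shift v)"
  have W: "finite ?W" "Poly_Mapping.keys a \<subseteq> ?W" "Poly_Mapping.keys b \<subseteq> ?W"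
    by auto
  have "deriv_term a c * Poly_Mapping.single b d
      = (\<Sum>v\<in>?W. Poly_Mapping.single (?M v) (c * d * of_nat (Poly_Mapping.lookup a v)))"
    unfolding deriv_term_superset[OF W(1,2)] sum_distrib_right
    by (rule sum.cong[OF refl single_monomial_shift_mult])
  moreover have "Poly_Mapping.single a c * deriv_term b d
      = (\<Sum>v\<in>?W. Poly_Mapping.single (?M v) (c * d * of_nat (Poly_Mapping.lookup b v)))"
    unfolding deriv_term_superset[OF W(1,3)] sum_distrib_left
    by (rule sum.cong[OF refl], subst mult.commute, subst single_monomial_shift_mult) (simp add: ac_simps)
  moreover have "deriv_term (a + b) (c * d)
      = (\<Sum>v\<in>?W. Poly_Mapping.single (?M v) (c * d * of_nat (Poly_Mapping.lookup (a + b) v)))"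
    by (rule deriv_term_superset) (auto simp: keys_add_nat)
  ultimately show ?thesis
    by (simp add: lookup_add distrib_left single_add sum.distrib)
qed

lemma deriv_mult: "deriv (p * q) = deriv p * q + p * deriv q"
  unfolding deriv_termwise by (rule deriv.termwise_leibniz[OF deriv_term_leibniz])

lemma deriv_pconst: "deriv (pconst c) = 0"
  by (simp add: pconst_def deriv_single deriv_term_def)

lemma deriv_pvar: "deriv (pvar v) = pvar (shift v)"
  by (simp add: pvar_def deriv_single deriv_term_def)

lemma keys_monomial_shift: "Poly_Mapping.keys (mo - sg v + sg w) \<subseteq> Poly_Mapping.keys mo \<union> {w}"
  by (auto simp: in_keys_iff lookup_add lookup_minus lookup_single when_def split: if_splits)

lemma deriv_polyring:
  assumes "p \<in> polyring V" "V \<subseteq> W" "shift ` V \<subseteq> W"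
  shows "deriv p \<in> polyring W"
  unfolding deriv_termwise termwise_def deriv_term_def
proof (intro polyring_sum)
  fix mo v assume mo: "mo \<in> Poly_Mapping.keys p" and v: "v \<in> Poly_Mapping.keys mo"
  have "Poly_Mapping.keys mo \<subseteq> V"
    using mo assms(1) by (auto simp: vars_def polyring_def)
  then have "Poly_Mapping.keys (mo - sg v + sg (shift v)) \<subseteq> W"
    using keys_monomial_shift[of mo v "shift v"] v assms(2,3) by blast
  then show "Poly_Mapping.single (mo - sg v + sg (shift v))
      (Poly_Mapping.lookup p mo * of_nat (Poly_Mapping.lookup mo v)) \<in> polyring W"
    using vars_single unfolding polyring_def by blast
qed

lemma trunc_deriv: "trunc (deriv p) = 0"
  unfolding deriv_termwise termwise_def deriv_term_def trunc_sum trunc_single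
proof (intro sum.neutral ballI)
  fix mo :: "dvar \<Rightarrow>\<^sub>0 nat" and v assume "v \<in> Poly_Mapping.keys mo"
  then have "shift v \<in> Poly_Mapping.keys (mo - sg v + sg (shift v))"
    by (cases v) (auto simp: in_keys_iff lookup_add lookup_single)
  moreover have "dorder (shift v) \<noteq> 0"
    by (cases v) auto
  ultimately show "trunc_term (mo - sg v + sg (shift v))
      (Poly_Mapping.lookup p mo * of_nat (Poly_Mapping.lookup mo v)) = 0"
    unfolding trunc_term_def by auto
qed

lemma deriv_ideal_in:
  assumes p: "p \<in> ideal_in (polyring V) S" and W: "V \<subseteq> W" "shift ` V \<subseteq> W"
  shows "deriv p \<in> ideal_in (polyring W) (S \<union> deriv ` S)"
proof -
  from p obtain F c where F: "finite F" "F \<subseteq> S" "\<forall>y\<in>F. c y \<in> polyring V" "p = (\<Sum>y\<in>F. c y * y)"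
    by (rule ideal_inE)
  have gen: "y \<in> ideal_in (polyring W) (S \<union> deriv ` S)" if "y \<in> S \<union> deriv ` S" for y
    using that polyring_1 by (rule ideal_in_generator)
  have "deriv (c y) * y + c y * deriv y \<in> ideal_in (polyring W) (S \<union> deriv ` S)" if "y \<in> F" for y
  proof (rule ideal_in_add; rule ideal_in_mult[OF gen])
    show "deriv (c y) \<in> polyring W" "c y \<in> polyring W"
      using F(3) that deriv_polyring[OF _ W] polyring_mono[OF W(1)] by auto
  qed (use F(2) that in auto)
  then show ?thesis
    unfolding F(4) deriv_sum deriv_mult by (rule ideal_in_sum)
qed

section \<open>Univariate polynomials in a single variable\<close>

definition poly_in_var :: "dvar \<Rightarrow> complex poly \<Rightarrow> dpoly" where
  "poly_in_var v q = poly (map_poly pconst q) (pvar v)"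

lemma map_poly_pconst_pCons: "map_poly pconst (pCons c p) = pCons (pconst c) (map_poly pconst p)"
  by (rule map_poly_pCons) simp

lemma map_poly_pconst_add: "map_poly pconst (p + q) = map_poly pconst p + map_poly pconst q"
  by (rule poly_eqI) (simp add: coeff_map_poly pconst_add)

lemma map_poly_pconst_mult: "map_poly pconst (p * q) = map_poly pconst p * map_poly pconst q"
proof (induction p)
  case (pCons a p)
  have "map_poly pconst (smult a q) = smult (pconst a) (map_poly pconst q)"
    by (rule poly_eqI) (simp add: coeff_map_poly pconst_mult)
  then show ?case
    by (simp add: map_poly_pconst_add map_poly_pconst_pCons pCons.IH)
qed simp

lemma poly_in_var_pCons: "poly_in_var v (pCons c p) = pconst c + pvar v * poly_in_var v p"
  by (simp add: poly_in_var_def map_poly_pconst_pCons)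

lemma poly_in_var_add: "poly_in_var v (p + q) = poly_in_var v p + poly_in_var v q"
  by (simp add: poly_in_var_def map_poly_pconst_add)

lemma poly_in_var_mult: "poly_in_var v (p * q) = poly_in_var v p * poly_in_var v q"
  by (simp add: poly_in_var_def map_poly_pconst_mult)

lemma poly_in_var_1: "poly_in_var v 1 = 1"
  by (simp add: poly_in_var_def)

lemma poly_in_var_power: "poly_in_var v (p ^ k) = poly_in_var v p ^ k"
  by (induction k) (simp_all add: poly_in_var_1 poly_in_var_mult)

lemma poly_in_var_monom: "poly_in_var v (monom c k) = pconst c * pvar v ^ k"
  by (simp add: poly_in_var_def poly_monom map_poly_monom)

lemma poly_in_var_sum: "poly_in_var v (sum f A) = (\<Sum>a\<in>A. poly_in_var v (f a))"
  by (induction A rule: infinite_finite_induct) (simp_all add: poly_in_var_def map_poly_pconst_add)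

lemma deriv_poly_in_var: "deriv (poly_in_var v p) = poly_in_var v (pderiv p) * pvar (shift v)"
proof (induction p)
  case 0
  then show ?case
    using deriv_pconst[of 0] by (simp add: poly_in_var_def)
next
  case (pCons a p)
  have "deriv (poly_in_var v (pCons a p))
      = pvar (shift v) * poly_in_var v p + pvar v * (poly_in_var v (pderiv p) * pvar (shift v))"
    by (simp add: poly_in_var_pCons deriv_add deriv_mult deriv_pconst deriv_pvar pCons.IH)
  also have "\<dots> = poly_in_var v (pderiv (pCons a p)) * pvar (shift v)"
    by (simp add: pderiv_pCons poly_in_var_add poly_in_var_pCons algebra_simps)
  finally show ?case .
qed

lemma poly_in_var_polyring: "v \<in> V \<Longrightarrow> poly_in_var v p \<in> polyring V"
proof (induction p)
  case (pCons a p)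
  then show ?case
    unfolding poly_in_var_pCons by (intro polyring_add polyring_mult polyring_pconst polyring_pvar)
qed (simp add: poly_in_var_def polyring_0)

section \<open>Squarefree parts of univariate polynomials\<close>

lemma order_prod_linear:
  fixes A :: "'a::idom set"
  assumes "finite A"
  shows "order a (\<Prod>z\<in>A. [:-z, 1:]) = (if a \<in> A then 1 else 0)"
  using assms
proof (induction A rule: finite_induct)
  case (insert z A)
  have "(\<Prod>z\<in>A. [:-z, 1:]) \<noteq> 0"
    using insert.hyps(1) by (simp add: prod_zero_iff)
  then have "order a ([:-z, 1:] * (\<Prod>z\<in>A. [:-z, 1:])) = order a [:-z, 1:] + order a (\<Prod>z\<in>A. [:-z, 1:])"
    by (intro order_mult no_zero_divisors) simp_all
  then have "order a (\<Prod>z\<in>insert z A. [:-z, 1:]) = order a [:-z, 1:] + order a (\<Prod>z\<in>A. [:-z, 1:])"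
    using insert.hyps by simp
  moreover have "order a [:-z, 1:] = (if a = z then 1 else 0)"
    using order_power_n_n[of a 1] by (auto intro: order_0I)
  ultimately show ?case
    using insert by auto
qed (simp add: order_0I)

lemma rsquarefree_prod_linear: "finite A \<Longrightarrow> rsquarefree (\<Prod>z\<in>A. [:-z, 1:])"
  by (simp add: rsquarefree_def order_prod_linear prod_zero_iff)

lemma bezout_if_no_common_root:
  fixes p q :: "'a::{alg_closed_field, field_gcd} poly"
  assumes "\<And>z. poly p z \<noteq> 0 \<or> poly q z \<noteq> 0"
  obtains a b where "a * p + b * q = 1"
proof -
  have "degree (gcd p q) = 0"
  proof (rule ccontr)
    assume "degree (gcd p q) \<noteq> 0"
    then obtain z where "poly (gcd p q) z = 0"
      using alg_closed_imp_poly_has_root by blast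
    then show False
      using assms[of z] by (metis dvd_mult_cancel_left gcd_dvd1 gcd_dvd2 dvdE poly_mult mult_zero_left)
  qed
  moreover have "gcd p q \<noteq> 0"
    using assms[of 0] by auto
  ultimately have "gcd p q = 1"
    using is_unit_gcd_iff is_unit_iff_degree by blast
  then show ?thesis
    using bezout_coefficients_fst_snd[of p q] that by metis
qed

lemma complex_poly_radical:
  fixes p :: "complex poly"
  assumes "p \<noteq> 0"
  obtains q a b where "p dvd q ^ degree p" "a * q + b * pderiv q = 1"
proof -
  define q where "q = (\<Prod>z\<in>{z. poly p z = 0}. [:-z, 1:])"
  have fin: "finite {z. poly p z = 0}"
    using poly_roots_finite[OF assms] .
  have "p dvd q ^ degree p"
    using nullstellensatz_univariate[of p q] assms fin
    by (auto simp: q_def poly_prod prod_zero_iff)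
  moreover have "\<And>z. poly q z \<noteq> 0 \<or> poly (pderiv q) z \<noteq> 0"
    using rsquarefree_prod_linear[OF fin] by (simp add: q_def rsquarefree_roots)
  then obtain a b where "a * q + b * pderiv q = 1"
    using bezout_if_no_common_root[of q "pderiv q"] by blast
  ultimately show ?thesis
    using that by blast
qed

section \<open>Zero-dimensional radical ideals\<close>

interpretation dpoly_space: vector_space "\<lambda>(c::complex) (p::dpoly). pconst c * p"
  by standard (simp_all add: algebra_simps pconst_add pconst_mult)

lemma dependence_if_not_inj:
  fixes w :: "nat \<Rightarrow> dpoly"
  assumes "\<not> inj_on w {..N}"
  obtains l where "\<exists>i\<le>N. l i \<noteq> 0" "(\<Sum>i\<le>N. pconst (l i) * w i) = 0"
proof -
  obtain i j where ij: "i \<le> N" "j \<le> N" "i \<noteq> j" "w i = w j"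
    using assms unfolding inj_on_def by auto
  define l where "l k = (if k = i then 1 else if k = j then -1 else (0::complex))" for k
  have "pconst (l k) * w k = (if k = i then w i else 0) - (if k = j then w j else 0)" for k
    using ij by (auto simp: l_def pconst_uminus)
  then have "(\<Sum>k\<le>N. pconst (l k) * w k) = 0"
    using ij by (simp add: sum_subtractf)
  moreover have "l i \<noteq> 0"
    by (simp add: l_def)
  ultimately show ?thesis
    using that ij(1) by blast
qed

lemma dependence_if_dependent_image:
  fixes w :: "nat \<Rightarrow> dpoly"
  assumes inj: "inj_on w {..N}" and dep: "dpoly_space.dependent (w ` {..N})"
  obtains l where "\<exists>i\<le>N. l i \<noteq> 0" "(\<Sum>i\<le>N. pconst (l i) * w i) = 0"
proof -
  obtain t u where tu: "finite t" "t \<subseteq> w ` {..N}" "(\<Sum>v\<in>t. pconst (u v) * v) = 0" "\<exists>v\<in>t. u v \<noteq> 0"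
    using dep unfolding dpoly_space.dependent_explicit by blast
  define K where "K = {k \<in> {..N}. w k \<in> t}"
  define l where "l k = (if w k \<in> t then u (w k) else 0)" for k
  have tK: "w ` K = t"
    using tu(2) unfolding K_def by auto
  have injK: "inj_on w K"
    using inj unfolding K_def by (rule inj_on_subset) auto
  have "(\<Sum>k\<le>N. pconst (l k) * w k) = (\<Sum>k\<in>K. pconst (u (w k)) * w k)"
    unfolding K_def l_def by (rule sum.mono_neutral_cong_right) auto
  also have "\<dots> = (\<Sum>v\<in>t. pconst (u v) * v)"
    unfolding tK[symmetric] by (rule sum.reindex[OF injK, symmetric, unfolded comp_def])
  also have "\<dots> = 0"
    by (rule tu(3))
  finally have "(\<Sum>k\<le>N. pconst (l k) * w k) = 0" .
  moreover have "\<exists>i\<le>N. l i \<noteq> 0"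
    using tu(2,4) by (auto simp: l_def)
  ultimately show ?thesis
    using that by blast
qed

lemma dependence_in_finite_span:
  fixes w :: "nat \<Rightarrow> dpoly" and B :: "dpoly set"
  assumes B: "finite B" "card B \<le> N"
    and w: "\<And>i. i \<le> N \<Longrightarrow> \<exists>a. w i = (\<Sum>b\<in>B. pconst (a b) * b)"
  obtains l where "\<exists>i\<le>N. l i \<noteq> 0" "(\<Sum>i\<le>N. pconst (l i) * w i) = 0"
proof (cases "inj_on w {..N}")
  case False
  then show ?thesis
    using that by (rule dependence_if_not_inj)
next
  case True
  have span: "w ` {..N} \<subseteq> dpoly_space.span B"
  proof
    fix x assume "x \<in> w ` {..N}"
    then obtain a where "x = (\<Sum>b\<in>B. pconst (a b) * b)"
      using w by blast
    then show "x \<in> dpoly_space.span B"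
      by (auto intro: dpoly_space.span_sum dpoly_space.span_scale dpoly_space.span_base)
  qed
  have "dpoly_space.dependent (w ` {..N})"
  proof (rule ccontr)
    assume "\<not> dpoly_space.dependent (w ` {..N})"
    from dpoly_space.independent_span_bound[OF B(1) this span]
    show False
      using B(2) card_image[OF True] by simp
  qed
  with True show ?thesis
    using that by (rule dependence_if_dependent_image)
qed

lemma zero_dim_univariate_member:
  assumes zdim: "zero_dim_in (polyring V) (ideal_in (polyring V) G)" and v: "v \<in> V"
  obtains p where "p \<noteq> 0" "poly_in_var v p \<in> ideal_in (polyring V) G"
proof -
  let ?I = "ideal_in (polyring V) G"
  from zdim obtain B where B: "finite B"
    "\<forall>p\<in>polyring V. \<exists>a. p - (\<Sum>b\<in>B. pconst (a b) * b) \<in> ?I"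
    unfolding zero_dim_in_def by auto
  then have "\<forall>i. \<exists>a. pvar v ^ i - (\<Sum>b\<in>B. pconst (a b) * b) \<in> ?I"
    using polyring_power[OF polyring_pvar[OF v]] by blast
  from choice[OF this] obtain A where A: "\<forall>i. pvar v ^ i - (\<Sum>b\<in>B. pconst (A i b) * b) \<in> ?I" ..
  define w where "w i = (\<Sum>b\<in>B. pconst (A i b) * b)" for i
  obtain l where l: "\<exists>i\<le>card B. l i \<noteq> 0" "(\<Sum>i\<le>card B. pconst (l i) * w i) = 0"
    using dependence_in_finite_span[OF B(1) order.refl, of w] unfolding w_def by blast
  define p where "p = (\<Sum>i\<le>card B. monom (l i) i)"
  have "p \<noteq> 0"
    using l(1) by (auto simp: p_def coeff_sum coeff_monom poly_eq_iff)
  moreover have "poly_in_var v p = (\<Sum>i\<le>card B. pconst (l i) * (pvar v ^ i - w i))"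
    using l(2) by (simp add: p_def poly_in_var_sum poly_in_var_monom algebra_simps sum_subtractf)
  moreover have "\<dots> \<in> ?I"
    by (rule ideal_in_sum, rule ideal_in_mult) (simp_all add: w_def A polyring_pconst)
  ultimately show ?thesis
    using that by simp
qed

lemma radical_univariate_member:
  assumes rad: "radical_in (polyring V) (ideal_in (polyring V) G)"
    and zdim: "zero_dim_in (polyring V) (ideal_in (polyring V) G)" and v: "v \<in> V"
  obtains q a b where "poly_in_var v q \<in> ideal_in (polyring V) G" "a * q + b * pderiv q = 1"
proof -
  obtain p where p: "p \<noteq> 0" "poly_in_var v p \<in> ideal_in (polyring V) G"
    using zero_dim_univariate_member[OF zdim v] .
  obtain q a b where q: "p dvd q ^ degree p" "a * q + b * pderiv q = 1"
    using complex_poly_radical[OF p(1)] .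
  from q(1) obtain h where h: "q ^ degree p = p * h"
    by (rule dvdE)
  have "poly_in_var v q ^ degree p = poly_in_var v h * poly_in_var v p"
    unfolding poly_in_var_power[symmetric] h poly_in_var_mult by (rule mult.commute)
  also have "\<dots> \<in> ideal_in (polyring V) G"
    by (rule ideal_in_mult[OF p(2) poly_in_var_polyring[OF v]])
  finally have "poly_in_var v q \<in> ideal_in (polyring V) G"
    using rad poly_in_var_polyring[OF v] unfolding radical_in_def by blast
  then show ?thesis
    using that q(2) by blast
qed

lemma shift_var_in_ideal_with_derivatives:
  assumes rad: "radical_in (polyring V) (ideal_in (polyring V) G)"
    and zdim: "zero_dim_in (polyring V) (ideal_in (polyring V) G)"
    and W: "V \<subseteq> W" "shift ` V \<subseteq> W" and v: "v \<in> V"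
  shows "pvar (shift v) \<in> ideal_in (polyring W) (G \<union> deriv ` G)"
proof -
  let ?J = "ideal_in (polyring W) (G \<union> deriv ` G)"
  let ?x' = "pvar (shift v)"
  obtain q a b where q: "poly_in_var v q \<in> ideal_in (polyring V) G" "a * q + b * pderiv q = 1"
    using radical_univariate_member[OF rad zdim v] .
  have W_members: "poly_in_var v r \<in> polyring W" "?x' \<in> polyring W" for r
    using v W by (auto intro: poly_in_var_polyring polyring_pvar)
  have "poly_in_var v q \<in> ?J"
    using q(1) ideal_in_mono[OF polyring_mono[OF W(1)], of G "G \<union> deriv ` G"] by blast
  then have 1: "(poly_in_var v a * ?x') * poly_in_var v q \<in> ?J"
    by (rule ideal_in_mult) (intro polyring_mult W_members)
  have "poly_in_var v (pderiv q) * ?x' \<in> ?J"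
    using deriv_ideal_in[OF q(1) W] by (simp add: deriv_poly_in_var)
  then have 2: "poly_in_var v b * (poly_in_var v (pderiv q) * ?x') \<in> ?J"
    by (rule ideal_in_mult) (rule W_members)
  have decomp: "?x' = (poly_in_var v a * ?x') * poly_in_var v q
      + poly_in_var v b * (poly_in_var v (pderiv q) * ?x')"
    using arg_cong[OF q(2), of "\<lambda>r. ?x' * poly_in_var v r"]
    by (simp add: poly_in_var_add poly_in_var_mult poly_in_var_1 algebra_simps)
  show ?thesis
    using ideal_in_add[OF 1 2] by (simp only: decomp[symmetric])
qed

lemma ideal_with_derivatives_subset_diff_ideal:
  assumes "V \<subseteq> W" "G \<subseteq> S"
  shows "ideal_in (polyring V) (S \<union> deriv ` G) \<subseteq> diff_ideal_in (polyring W) S"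
  unfolding diff_ideal_in_def
proof (rule ideal_in_mono)
  show "polyring V \<subseteq> polyring W"
    using assms(1) by (rule polyring_mono)
  have "h = (deriv ^^ 0) h" "deriv h = (deriv ^^ 1) h" for h
    by simp_all
  then show "S \<union> deriv ` G \<subseteq> {(deriv ^^ k) h |h k. h \<in> S}"
    using assms(2) by blast
qed

lemma one_in_ideal_if_trunc_generators:
  assumes one: "1 \<in> diff_ideal_in (polyring W) S"
    and W: "{v \<in> W. dorder v = 0} \<subseteq> V"
    and S: "\<And>h k. h \<in> S \<Longrightarrow> trunc ((deriv ^^ k) h) \<in> ideal_in (polyring V) T"
  shows "1 \<in> ideal_in (polyring V) T"
proof -
  have "trunc 1 \<in> ideal_in (polyring V) T"
    using one W unfolding diff_ideal_in_def by (rule trunc_ideal_in) (use S in blast)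
  then show ?thesis
    by (simp add: trunc_1)
qed

lemma trunc_iterated_deriv:
  "trunc ((deriv ^^ k) h) = (if k = 0 then trunc h else 0)"
  by (cases k) (simp_all add: trunc_deriv)

lemma trunc_vars_upto_0:
  "p \<in> polyring (vars_upto n m 0) \<Longrightarrow> trunc p = p"
  by (rule trunc_eq_self) (auto simp: polyring_def vars_upto_def)

lemma x_derivative_in_prolongation:
  fixes n m s :: nat and f g :: "nat \<Rightarrow> dpoly"
  assumes rad: "radical_in (polyring (vars_upto n m 0))
               (ideal_in (polyring (vars_upto n m 0)) (g ` {..<s}))"
    and zdim: "zero_dim_in (polyring (vars_upto n m 0))
               (ideal_in (polyring (vars_upto n m 0)) (g ` {..<s}))"
    and j: "j < n"
  shows "pvar (X j 1) \<in> ideal_in (polyring (vars_upto n m 1))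
    ((\<lambda>i. pvar (X i 1) - f i) ` {..<n} \<union> g ` {..<s} \<union> (\<lambda>i. deriv (g i)) ` {..<s})"
proof -
  have "pvar (shift (X j 0))
      \<in> ideal_in (polyring (vars_upto n m 1)) (g ` {..<s} \<union> deriv ` g ` {..<s})"
    by (rule shift_var_in_ideal_with_derivatives[OF rad zdim]) (use j in \<open>auto simp: vars_upto_def\<close>)
  also have "\<dots> \<subseteq> ideal_in (polyring (vars_upto n m 1))
      ((\<lambda>i. pvar (X i 1) - f i) ` {..<n} \<union> g ` {..<s} \<union> (\<lambda>i. deriv (g i)) ` {..<s})"
    by (rule ideal_in_mono[OF order.refl]) auto
  finally show ?thesis
    by (simp only: shift.simps One_nat_def)
qed

lemma trunc_system_generators:
  fixes n m s :: nat and f g :: "nat \<Rightarrow> dpoly" and J :: "dpoly set"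
  defines "J \<equiv> ideal_in (polyring (vars_upto n m 1))
    ((\<lambda>i. pvar (X i 1) - f i) ` {..<n} \<union> g ` {..<s} \<union> (\<lambda>i. deriv (g i)) ` {..<s})"
  assumes f_poly: "\<forall>i<n. f i \<in> polyring (vars_upto n m 0)"
    and g_poly: "\<forall>i<s. g i \<in> polyring (vars_upto n m 0)"
    and x'J: "\<And>j. j < n \<Longrightarrow> pvar (X j 1) \<in> J"
    and h: "h \<in> (\<lambda>i. pvar (X i 1) - f i) ` {..<n} \<union> g ` {..<s}"
  shows "trunc ((deriv ^^ k) h) \<in> J"
proof -
  have gen: "h \<in> J"
    unfolding J_def using h polyring_1 by (intro ideal_in_generator) auto
  have "trunc h \<in> J"
    using h
  proof
    assume "h \<in> (\<lambda>i. pvar (X i 1) - f i) ` {..<n}"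
    then obtain i where i: "i < n" "h = pvar (X i 1) - f i"
      by blast
    have "trunc (pvar (X i 1)) = 0"
      by (simp add: pvar_def trunc_single trunc_term_def)
    then have "trunc h = h - pvar (X i 1)"
      using trunc_vars_upto_0[OF f_poly[rule_format, OF i(1)]] i(2) by (simp add: trunc_diff)
    also have "\<dots> \<in> J"
      using gen x'J[OF i(1)] unfolding J_def by (rule ideal_in_diff)
    finally show "trunc h \<in> J" .
  next
    assume "h \<in> g ` {..<s}"
    then show "trunc h \<in> J"
      using g_poly gen trunc_vars_upto_0 by auto
  qed
  then show ?thesis
    by (simp add: trunc_iterated_deriv J_def ideal_in_0)
qed

theorem proposition3p1:
  fixes n m s :: nat and f g :: "nat \<Rightarrow> dpoly"
  assumes f_poly: "\<forall>i<n. f i \<in> polyring (vars_upto n m 0)"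
    and g_poly: "\<forall>i<s. g i \<in> polyring (vars_upto n m 0)"
    and rad: "radical_in (polyring (vars_upto n m 0))
               (ideal_in (polyring (vars_upto n m 0)) (g ` {..<s}))"
    and zdim: "zero_dim_in (polyring (vars_upto n m 0))
               (ideal_in (polyring (vars_upto n m 0)) (g ` {..<s}))"
  shows "1 \<in> diff_ideal_in (polyring (vars_all n m))
            ((\<lambda>i. pvar (X i 1) - f i) ` {..<n} \<union> g ` {..<s})
     \<longleftrightarrow> 1 \<in> ideal_in (polyring (vars_upto n m 1))
            ((\<lambda>i. pvar (X i 1) - f i) ` {..<n} \<union> g ` {..<s} \<union> (\<lambda>i. deriv (g i)) ` {..<s})"
    (is "1 \<in> diff_ideal_in ?Ra ?S \<longleftrightarrow> 1 \<in> ?J")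
proof
  assume "1 \<in> diff_ideal_in ?Ra ?S"
  then show "1 \<in> ?J"
  proof (rule one_in_ideal_if_trunc_generators)
    show "{v \<in> vars_all n m. dorder v = 0} \<subseteq> vars_upto n m 1"
      by (auto simp: vars_all_def vars_upto_def)
    show "trunc ((deriv ^^ k) h) \<in> ?J" if "h \<in> ?S" for h k
      using x_derivative_in_prolongation[OF rad zdim] that by (rule trunc_system_generators[OF f_poly g_poly])
  qed
next
  have "?J \<subseteq> diff_ideal_in ?Ra ?S"
    using ideal_with_derivatives_subset_diff_ideal[of "vars_upto n m 1" "vars_all n m" "g ` {..<s}" ?S]
    by (auto simp: vars_upto_def vars_all_def image_image)
  then show "1 \<in> ?J \<Longrightarrow> 1 \<in> diff_ideal_in ?Ra ?S"
    by blast
qed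

end
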